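(* Under Assumption (A) of the context, for every $t$ and every integrable function $h$, $$\mathbb{E}_1[h(Y_t)\mid\mathcal{F}_{t-1}]=\mathbb{E}_1[h(Y_t)\mid\mathbf{P}_t]=\varepsilon_n\,\mathbb{E}_{1,\mathbf{P}_t}h(Y)+(1-\varepsilon_n)\,\mathbb{E}_0h(Y).$$
   Context: $\mathcal{W}$ is a finite vocabulary. For a probability vector $\mathbf{P}$ on $\mathcal{W}$, $\mu_{1,\mathbf{P}}$ is the distribution on $[0,1]$ with CDF $F_{1,\mathbf{P}}(r)=\sum_wP_wr^{1/P_w}$, and $\mathbb{E}_{1,\mathbf{P}}$ is expectation for $Y\sim\mu_{1,\mathbf{P}}$; $\mathbb{E}_0$ is expectation for $Y\sim U(0,1)$. Watermark model: for $t=1,\dots,n$ a random next-token distribution $\mathbf{P}_t$ is produced, $\xi_t=(U_{t,w})_w$ has i.i.d. $U(0,1)$ entries, the decoder is $\mathcal{S}(\mathbf{P},\xi)=\arg\max_w\frac{\log U_w}{P_w}$, the observed token is $w_t$, and $Y_t=U_{t,w_t}$; $\mathbb{E}_1$ denotes expectation under this model. Let $\mathcal{F}_{t-1}=\sigma(\{w_j,\xi_j,\mathbf{P}_{j+1}\}_{j=1}^{t-1})$. Assumption (A): (a) $\xi_1,\dots,\xi_n$ are i.i.d. and $\xi_t$ is independent of $\mathcal{F}_{t-1}$; (b) with probability $\varepsilon_n$, $w_t=\mathcal{S}(\mathbf{P}_t,\xi_t)$; otherwise $w_t$ is drawn from $\mathbf{P}_t$ and, conditionally on $\mathcal{F}_{t-1}$,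 is independent of $\xi_t$. *)

theory Defs
  imports "HOL-Probability.Probability"
begin

abbreviation vecM :: "('w \<Rightarrow> real) measure" where
  "vecM \<equiv> PiM UNIV (\<lambda>_. borel)"

definition unif01 :: "real measure" where
  "unif01 = uniform_measure lborel {0..1}"

definition cdf1 :: "('w::finite \<Rightarrow> real) \<Rightarrow> real \<Rightarrow> real" where
  "cdf1 P r = (if r \<le> 0 then 0 else if 1 \<le> r then 1
               else (\<Sum>w\<in>UNIV. P w * r powr (1 / P w)))"

definition mu1 :: "('w::finite \<Rightarrow> real) \<Rightarrow> real measure" where
  "mu1 P = interval_measure (cdf1 P)"

text \<open>The Gumbel-max decoder S(P, xi) = argmax_w (log U_w)/P_w, over tokens with P_w > 0
  (tokens with P_w = 0 have score -infinity). Ties occur with probability zero.\<close>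
definition decoder :: "('w \<Rightarrow> real) \<Rightarrow> ('w \<Rightarrow> real) \<Rightarrow> 'w" where
  "decoder P u = (SOME v. 0 < P v \<and> (\<forall>v'. 0 < P v' \<longrightarrow> ln (u v') / P v' \<le> ln (u v) / P v))"

definition gen :: "'a measure \<Rightarrow> ('a \<Rightarrow> 'b) \<Rightarrow> 'b measure \<Rightarrow> 'a set set" where
  "gen M X N = {X -` A \<inter> space M | A. A \<in> sets N}"

text \<open>F_{t-1} = sigma({w_j, xi_j, P_{j+1}}_{j=1}^{t-1}), together with P_t
  (already contained for t \<ge> 2; added so that F_0 contains P_1).\<close>
definition filt :: "'a measure \<Rightarrow> (nat \<Rightarrow> 'a \<Rightarrow> 'w \<Rightarrow> real) \<Rightarrow> (nat \<Rightarrow> 'a \<Rightarrow> 'w \<Rightarrow> real)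
                    \<Rightarrow> (nat \<Rightarrow> 'a \<Rightarrow> 'w) \<Rightarrow> nat \<Rightarrow> 'a measure" where
  "filt M P U W t = sigma (space M)
     (gen M (P t) vecM \<union>
      (\<Union>j\<in>{1..<t}. gen M (W j) (count_space UNIV) \<union> gen M (U j) vecM \<union> gen M (P (Suc j)) vecM))"

definition filt_xi :: "'a measure \<Rightarrow> (nat \<Rightarrow> 'a \<Rightarrow> 'w \<Rightarrow> real) \<Rightarrow> (nat \<Rightarrow> 'a \<Rightarrow> 'w \<Rightarrow> real)
                    \<Rightarrow> (nat \<Rightarrow> 'a \<Rightarrow> 'w) \<Rightarrow> nat \<Rightarrow> 'a measure" where
  "filt_xi M P U W t = sigma (space M) (sets (filt M P U W t) \<union> gen M (U t) vecM)"

definition sigP :: "'a measure \<Rightarrow> (nat \<Rightarrow> 'a \<Rightarrow> 'w \<Rightarrow> real) \<Rightarrow> nat \<Rightarrow> 'a measure" where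
  "sigP M P t = sigma (space M) (gen M (P t) vecM)"

end

theory Submission
  imports Defs
begin

(* Split h(Y_t) according to the watermark coin.  On the watermarked event w_t is the Gumbel-max
   output S(P_t, xi_t).  Since xi_t is independent of F_{t-1}, freezing P_t reduces its conditional
   mean to the integral of h(u_S(p,u)) over uniform u at p = P_t, and the Gumbel-max computation
   P(S(p,U) = w, U_w <= r) = p_w r^(1/p_w) identifies the law of U_S(p,U) as mu_{1,p}.  Otherwise
   w_t = v with conditional probability (1 - eps) P_t(v), while U_{t,v} is still uniform and
   independent of F_{t-1}; these terms add up to (1 - eps) E_0 h.  The resulting right-hand side
   is a function of P_t alone, so conditioning on sigma(P_t) instead of F_{t-1} gives the same
   answer. *)

lemma subalgebra_trans: "subalgebra M N \<Longrightarrow> subalgebra N K \<Longrightarrow> subalgebra M K"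
  by (auto simp: subalgebra_def)

lemma integrable_select:
  fixes f :: "'i::finite \<Rightarrow> 'a \<Rightarrow> real"
  assumes f: "\<And>i. integrable M (f i)" and k: "k \<in> measurable M (count_space UNIV)"
  shows "integrable M (\<lambda>x. f (k x) x)"
proof (rule Bochner_Integration.integrable_bound)
  show "integrable M (\<lambda>x. \<Sum>i\<in>UNIV. \<bar>f i x\<bar>)"
    using f by (intro Bochner_Integration.integrable_sum integrable_abs)
  show "(\<lambda>x. f (k x) x) \<in> borel_measurable M"
    using borel_measurable_integrable[OF f] by (rule measurable_compose_countable[where f=f, OF _ k])
  have "\<bar>f (k x) x\<bar> \<le> (\<Sum>i\<in>UNIV. \<bar>f i x\<bar>)" for x
    by (rule member_le_sum) auto
  then show "AE x in M. norm (f (k x) x) \<le> norm (\<Sum>i\<in>UNIV. \<bar>f i x\<bar>)"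
    by (simp add: sum_nonneg)
qed

lemma integrable_mult_bounded:
  fixes f g :: "'a \<Rightarrow> real"
  assumes "integrable M f" "g \<in> borel_measurable M" "AE x in M. \<bar>g x\<bar> \<le> c"
  shows "integrable M (\<lambda>x. f x * g x)"
proof (rule Bochner_Integration.integrable_bound)
  show "integrable M (\<lambda>x. c * f x)" using assms(1) by simp
  show "(\<lambda>x. f x * g x) \<in> borel_measurable M" using assms(1,2) by measurable
  show "AE x in M. norm (f x * g x) \<le> norm (c * f x)"
    using assms(3)
  proof eventually_elim
    case (elim x)
    then have "\<bar>f x\<bar> * \<bar>g x\<bar> \<le> \<bar>f x\<bar> * \<bar>c\<bar>" by (intro mult_left_mono) auto
    then show ?case by (simp add: abs_mult mult.commute)
  qed
qed

lemma gen_subset_sets: "f \<in> measurable M N \<Longrightarrow> gen M f N \<subseteq> sets M"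
  by (auto simp: gen_def)

lemma subalgebra_sigma:
  assumes "G \<subseteq> sets M"
  shows "subalgebra M (sigma (space M) G)"
proof -
  have "G \<subseteq> Pow (space M)" using assms sets.sets_into_space by auto
  then show ?thesis
    using sets.sigma_sets_subset[OF assms] by (simp add: subalgebra_def space_measure_of_conv)
qed

lemma measurable_sigma_gen:
  assumes "f \<in> measurable M N" "gen M f N \<subseteq> G" "G \<subseteq> sets M"
  shows "f \<in> measurable (sigma (space M) G) N"
proof -
  have "G \<subseteq> Pow (space M)" using assms(3) sets.sets_into_space by auto
  show ?thesis
  proof (rule measurableI)
    show "f x \<in> space N" if "x \<in> space (sigma (space M) G)" for x
      using that assms(1) by (auto simp: space_measure_of_conv measurable_space)
    show "f -` A \<inter> space (sigma (space M) G) \<in> sets (sigma (space M) G)" if "A \<in> sets N" for A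
      using that assms(2) \<open>G \<subseteq> Pow (space M)\<close> by (auto simp: space_measure_of_conv gen_def)
  qed
qed

lemma subalgebra_sigma_adjoin:
  assumes N: "subalgebra M N" and f: "f \<in> measurable M K"
  shows "subalgebra M (sigma (space M) (sets N \<union> gen M f K))"
    and "subalgebra (sigma (space M) (sets N \<union> gen M f K)) N"
    and "f \<in> measurable (sigma (space M) (sets N \<union> gen M f K)) K"
proof -
  have G: "sets N \<union> gen M f K \<subseteq> sets M"
    using N gen_subset_sets[OF f] by (auto simp: subalgebra_def)
  then show "subalgebra M (sigma (space M) (sets N \<union> gen M f K))"
    by (rule subalgebra_sigma)
  have "sets N \<union> gen M f K \<subseteq> Pow (space M)" using G sets.sets_into_space by auto
  then show "subalgebra (sigma (space M) (sets N \<union> gen M f K)) N"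
    using N by (auto simp: subalgebra_def sets_measure_of space_measure_of_conv)
  show "f \<in> measurable (sigma (space M) (sets N \<union> gen M f K)) K"
    by (rule measurable_sigma_gen[OF f _ G]) auto
qed

lemma subalgebra_sigma_gen:
  assumes N: "subalgebra M N" and f: "f \<in> measurable N K"
  shows "subalgebra N (sigma (space M) (gen M f K))"
    and "f \<in> measurable (sigma (space M) (gen M f K)) K"
proof -
  have "space N = space M" using N by (simp add: subalgebra_def)
  then have gen: "gen M f K = gen N f K" by (simp add: gen_def)
  show "subalgebra N (sigma (space M) (gen M f K))"
    unfolding gen \<open>space N = space M\<close>[symmetric] by (rule subalgebra_sigma[OF gen_subset_sets[OF f]])
  show "f \<in> measurable (sigma (space M) (gen M f K)) K"
    unfolding gen \<open>space N = space M\<close>[symmetric] by (rule measurable_sigma_gen[OF f order.refl gen_subset_sets[OF f]])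
qed

lemma (in prob_space) distr_pair_indep_subalgebra:
  assumes F: "subalgebra M F" and X: "X \<in> measurable M N" and indep: "indep_set (sets F) (gen M X N)"
  shows "distr M (F \<Otimes>\<^sub>M N) (\<lambda>\<omega>. (\<omega>, X \<omega>)) = distr M F (\<lambda>\<omega>. \<omega>) \<Otimes>\<^sub>M distr M N X"
proof (rule pair_measure_eqI[symmetric])
  have id: "(\<lambda>\<omega>. \<omega>) \<in> measurable M F"
    using measurable_from_subalg[OF F measurable_id] .
  then show "sigma_finite_measure (distr M F (\<lambda>\<omega>. \<omega>))" "sigma_finite_measure (distr M N X)"
    using X by (simp_all add: prob_space_imp_sigma_finite prob_space_distr)
  show "sets (distr M F (\<lambda>\<omega>. \<omega>) \<Otimes>\<^sub>M distr M N X) = sets (distr M (F \<Otimes>\<^sub>M N) (\<lambda>\<omega>. (\<omega>, X \<omega>)))"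
    by (simp only: sets_distr) (rule sets_pair_measure_cong; simp)
  fix A B assume "A \<in> sets (distr M F (\<lambda>\<omega>. \<omega>))" "B \<in> sets (distr M N X)"
  then have A: "A \<in> sets F" and B: "B \<in> sets N" by simp_all
  have A_M: "A \<subseteq> space M" "A \<in> events"
    using F sets.sets_into_space[OF A] A by (auto simp: subalgebra_def)
  have XB: "X -` B \<inter> space M \<in> gen M X N"
    using B by (auto simp: gen_def)
  have "emeasure (distr M (F \<Otimes>\<^sub>M N) (\<lambda>\<omega>. (\<omega>, X \<omega>))) (A \<times> B)
      = emeasure M ((\<lambda>\<omega>. (\<omega>, X \<omega>)) -` (A \<times> B) \<inter> space M)"
    using id X A B by (intro emeasure_distr) auto
  also have "(\<lambda>\<omega>. (\<omega>, X \<omega>)) -` (A \<times> B) \<inter> space M = A \<inter> (X -` B \<inter> space M)"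
    using A_M by auto
  also have "emeasure M (A \<inter> (X -` B \<inter> space M)) = ennreal (prob A * prob (X -` B \<inter> space M))"
    using indep_setD[OF indep A XB] by (simp add: emeasure_eq_measure)
  also have "\<dots> = emeasure M A * emeasure M (X -` B \<inter> space M)"
    by (simp add: emeasure_eq_measure ennreal_mult)
  also have "emeasure M A = emeasure (distr M F (\<lambda>\<omega>. \<omega>)) A"
    using id A A_M by (simp add: emeasure_distr Int_absorb2)
  also have "emeasure M (X -` B \<inter> space M) = emeasure (distr M N X) B"
    using X B by (simp add: emeasure_distr)
  finally show "emeasure (distr M F (\<lambda>\<omega>. \<omega>)) A * emeasure (distr M N X) B
      = emeasure (distr M (F \<Otimes>\<^sub>M N) (\<lambda>\<omega>. (\<omega>, X \<omega>))) (A \<times> B)"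
    by simp
qed

lemma (in prob_space) integral_freeze_indep:
  fixes f :: "'a \<Rightarrow> 'b \<Rightarrow> real"
  assumes F: "subalgebra M F" and X: "X \<in> measurable M N" and indep: "indep_set (sets F) (gen M X N)"
    and f: "(\<lambda>(\<omega>, x). f \<omega> x) \<in> borel_measurable (F \<Otimes>\<^sub>M N)"
    and int: "integrable M (\<lambda>\<omega>. f \<omega> (X \<omega>))"
  shows "integrable M (\<lambda>\<omega>. \<integral>x. f \<omega> x \<partial>distr M N X)"
    and "(\<lambda>\<omega>. \<integral>x. f \<omega> x \<partial>distr M N X) \<in> borel_measurable F"
    and "(\<integral>\<omega>. f \<omega> (X \<omega>) \<partial>M) = (\<integral>\<omega>. \<integral>x. f \<omega> x \<partial>distr M N X \<partial>M)"
proof -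
  let ?MF = "distr M F (\<lambda>\<omega>. \<omega>)" and ?MX = "distr M N X"
  have id: "(\<lambda>\<omega>. \<omega>) \<in> measurable M F"
    using measurable_from_subalg[OF F measurable_id] .
  interpret pair_sigma_finite ?MF ?MX
    using id X by (simp add: pair_sigma_finite_def prob_space_imp_sigma_finite prob_space_distr)
  have joint: "?MF \<Otimes>\<^sub>M ?MX = distr M (F \<Otimes>\<^sub>M N) (\<lambda>\<omega>. (\<omega>, X \<omega>))"
    by (rule distr_pair_indep_subalgebra[OF F X indep, symmetric])
  have pair: "(\<lambda>\<omega>. (\<omega>, X \<omega>)) \<in> measurable M (F \<Otimes>\<^sub>M N)"
    using id X by measurable
  have int_pair: "integrable (?MF \<Otimes>\<^sub>M ?MX) (\<lambda>(\<omega>, x). f \<omega> x)"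
    unfolding joint using integrable_distr_eq[OF pair f] int by simp
  have int_fst: "integrable ?MF (\<lambda>\<omega>. \<integral>x. f \<omega> x \<partial>?MX)"
    using integrable_fst'[OF int_pair] by simp
  then show meas: "(\<lambda>\<omega>. \<integral>x. f \<omega> x \<partial>?MX) \<in> borel_measurable F"
    using borel_measurable_integrable measurable_cong_sets[of ?MF F] by fastforce
  show "integrable M (\<lambda>\<omega>. \<integral>x. f \<omega> x \<partial>?MX)"
    using int_fst integrable_distr_eq[OF id meas] by simp
  have "(\<integral>\<omega>. f \<omega> (X \<omega>) \<partial>M) = (\<integral>z. (\<lambda>(\<omega>, x). f \<omega> x) z \<partial>(?MF \<Otimes>\<^sub>M ?MX))"
    unfolding joint using integral_distr[OF pair f] by simp
  also have "\<dots> = (\<integral>\<omega>. \<integral>x. f \<omega> x \<partial>?MX \<partial>?MF)"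
    using integral_fst'[OF int_pair] by simp
  also have "\<dots> = (\<integral>\<omega>. \<integral>x. f \<omega> x \<partial>?MX \<partial>M)"
    by (rule integral_distr[OF id meas])
  finally show "(\<integral>\<omega>. f \<omega> (X \<omega>) \<partial>M) = (\<integral>\<omega>. \<integral>x. f \<omega> x \<partial>?MX \<partial>M)" .
qed

lemma (in prob_space) integral_mult_indicator_cond_prob:
  assumes F: "subalgebra M F" and C: "C \<in> events"
    and q: "q \<in> borel_measurable F" "integrable M q"
    and cond_prob: "\<And>A. A \<in> sets F \<Longrightarrow> prob (A \<inter> C) = (\<integral>\<omega>. indicator A \<omega> * q \<omega> \<partial>M)"
    and Y: "Y \<in> borel_measurable F" "integrable M (\<lambda>\<omega>. Y \<omega> * indicator C \<omega>)"
  shows "(\<integral>\<omega>. Y \<omega> * indicator C \<omega> \<partial>M) = (\<integral>\<omega>. Y \<omega> * q \<omega> \<partial>M)"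
proof -
  interpret finite_measure_subalgebra M F
    by unfold_locales (rule F)
  have "AE \<omega> in M. real_cond_exp M F (indicator C) \<omega> = q \<omega>"
  proof (rule real_cond_exp_charact)
    fix A assume A: "A \<in> sets F"
    then have "A \<in> events" using F by (auto simp: subalgebra_def)
    then have "(\<integral>\<omega>\<in>A. indicator C \<omega> \<partial>M) = prob (A \<inter> C)"
      using C by (simp add: set_lebesgue_integral_def indicator_inter_arith[symmetric])
    then show "(\<integral>\<omega>\<in>A. indicator C \<omega> \<partial>M) = (\<integral>\<omega>\<in>A. q \<omega> \<partial>M)"
      using cond_prob[OF A] by (simp add: set_lebesgue_integral_def)
  qed (use C q in \<open>auto simp: emeasure_eq_measure\<close>)
  then have "(\<integral>\<omega>. Y \<omega> * real_cond_exp M F (indicator C) \<omega> \<partial>M) = (\<integral>\<omega>. Y \<omega> * q \<omega> \<partial>M)"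
    using measurable_from_subalg[OF F Y(1)] measurable_from_subalg[OF F q(1)]
    by (intro integral_cong_AE) (auto elim: AE_mp)
  moreover have "(\<integral>\<omega>. Y \<omega> * real_cond_exp M F (indicator C) \<omega> \<partial>M) = (\<integral>\<omega>. Y \<omega> * indicator C \<omega> \<partial>M)"
    using Y C by (intro real_cond_exp_intg(2)) auto
  ultimately show ?thesis by simp
qed

section \<open>The Gumbel-max trick\<close>

abbreviation unif_vec :: "('w \<Rightarrow> real) measure" where
  "unif_vec \<equiv> PiM UNIV (\<lambda>_. unif01)"

lemma sets_unif01 [measurable_cong, simp]: "sets unif01 = sets borel"
  by (simp add: unif01_def)

lemma space_unif01 [simp]: "space unif01 = UNIV"
  by (simp add: unif01_def)

lemma prob_space_unif01: "prob_space unif01"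
  unfolding unif01_def by (rule prob_space_uniform_measure) auto

lemma borel_measurable_integrable_unif01: "integrable unif01 h \<Longrightarrow> h \<in> borel_measurable borel"
  using borel_measurable_integrable measurable_cong_sets[OF sets_unif01 refl] by blast

lemma emeasure_unif01_greaterThanLessThan:
  "0 \<le> c \<Longrightarrow> c \<le> 1 \<Longrightarrow> emeasure unif01 {0<..<c} = ennreal c"
  unfolding unif01_def by (simp add: Int_absorb1 subset_eq divide_ennreal_def)

lemma nn_integral_unif01_powr:
  assumes "0 < r" "r \<le> 1" "0 \<le> c"
  shows "(\<integral>\<^sup>+y. indicator {0<..r} y * ennreal (y powr c) \<partial>unif01) = ennreal (r powr (c + 1) / (c + 1))"
proof -
  have "(\<integral>\<^sup>+y. indicator {0<..r} y * ennreal (y powr c) \<partial>unif01)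
      = (\<integral>\<^sup>+y. ennreal (indicator {0..r} y * y powr c) \<partial>lborel)"
    unfolding unif01_def using assms
    by (subst nn_integral_uniform_measure)
       (auto simp: divide_ennreal_def intro!: nn_integral_cong split: split_indicator)
  also have "\<dots> = ennreal (r powr (c + 1) / (c + 1))"
    using assms has_integral_powr_from_0[of c r] by (intro nn_integral_has_integral_lebesgue) auto
  finally show ?thesis .
qed

lemma prob_space_unif_vec: "prob_space unif_vec"
  by (intro prob_space_PiM prob_space_unif01)

lemma sets_unif_vec: "sets unif_vec = sets vecM"
  by (rule sets_PiM_cong) auto

lemma space_unif_vec [simp]: "space unif_vec = UNIV"
  by (simp add: space_PiM)

lemma integral_unif_vec_component:
  fixes h :: "real \<Rightarrow> real"
  assumes "integrable unif01 h"
  shows "integrable unif_vec (\<lambda>u. h (u v))" "(\<integral>u. h (u v) \<partial>unif_vec) = (\<integral>y. h y \<partial>unif01)"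
proof -
  have comp: "(\<lambda>u. u v) \<in> measurable unif_vec unif01"
    by (rule measurable_component_singleton) simp
  have distr: "distr unif_vec unif01 (\<lambda>u. u v) = unif01"
    by (rule distr_PiM_component) (auto simp: prob_space_unif01)
  show "integrable unif_vec (\<lambda>u. h (u v))"
    using assms integrable_distr_eq[OF comp, of h] by (simp add: distr)
  show "(\<integral>u. h (u v) \<partial>unif_vec) = (\<integral>y. h y \<partial>unif01)"
    using assms integral_distr[OF comp, of h] by (simp add: distr)
qed

lemma measurable_decoder:
  fixes p u :: "'b \<Rightarrow> 'w::finite \<Rightarrow> real"
  assumes [measurable]: "p \<in> measurable N vecM" "u \<in> measurable N vecM"
  shows "(\<lambda>x. decoder (p x) (u x)) \<in> measurable N (count_space UNIV)"
proof -
  define maximizers where "maximizers x =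
    {v. 0 < p x v \<and> (\<forall>v'. 0 < p x v' \<longrightarrow> ln (u x v') / p x v' \<le> ln (u x v) / p x v)}" for x
  have "maximizers \<in> measurable N (count_space UNIV)"
    unfolding measurable_count_space_eq2_countable
  proof (intro conjI ballI)
    fix T :: "'w set"
    have "maximizers -` {T} \<inter> space N = {x \<in> space N. \<forall>v. (0 < p x v \<and>
        (\<forall>v'. 0 < p x v' \<longrightarrow> ln (u x v') / p x v' \<le> ln (u x v) / p x v)) = (v \<in> T)}"
      unfolding maximizers_def by auto
    also have "\<dots> \<in> sets N" by measurable
    finally show "maximizers -` {T} \<inter> space N \<in> sets N" .
  qed auto
  then have "(\<lambda>x. SOME v. v \<in> maximizers x) \<in> measurable N (count_space UNIV)"
    by (rule measurable_compose[of _ _ "count_space UNIV"]) auto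
  then show ?thesis
    by (simp add: decoder_def maximizers_def)
qed

lemma measurable_decoder_select:
  fixes p u :: "'b \<Rightarrow> 'w::finite \<Rightarrow> real"
  assumes "p \<in> measurable N vecM" "u \<in> measurable N vecM"
  shows "(\<lambda>x. u x (decoder (p x) (u x))) \<in> borel_measurable N"
  by (rule measurable_compose_countable[where f="\<lambda>i x. u x i", OF _ measurable_decoder[OF assms]])
    (use assms in measurable)

lemma measurable_gumbel_max_pair:
  fixes p :: "'a \<Rightarrow> 'w::finite \<Rightarrow> real" and h :: "real \<Rightarrow> real"
  assumes "h \<in> borel_measurable borel" "p \<in> measurable F vecM"
  shows "(\<lambda>(\<omega>, u). h (u (decoder (p \<omega>) u))) \<in> borel_measurable (F \<Otimes>\<^sub>M vecM)"
  using measurable_compose[OF measurable_decoder_select[OF measurable_compose[OF measurable_fst assms(2)] measurable_snd] assms(1)]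
  by (simp add: case_prod_beta')

text \<open>Up to a null set, the event that the decoder selects \<open>w\<close> and \<open>u w \<le> r\<close>: for positive
  coordinates, \<open>ln (u v) / p v < ln (u w) / p w\<close> iff \<open>u v < u w powr (p v / p w)\<close>.\<close>
definition winning_set :: "('w \<Rightarrow> real) \<Rightarrow> 'w \<Rightarrow> real \<Rightarrow> ('w \<Rightarrow> real) set" where
  "winning_set p w r = {u. 0 < p w \<and> 0 < u w \<and> u w \<le> r \<and>
     (\<forall>v. v \<noteq> w \<and> 0 < p v \<longrightarrow> 0 < u v \<and> u v < u w powr (p v / p w))}"

lemma sets_winning_set [measurable]: "winning_set p w r \<in> sets (unif_vec :: ('w::finite \<Rightarrow> real) measure)"
proof -
  have "winning_set p w r = {u \<in> space (unif_vec :: ('w \<Rightarrow> real) measure). 0 < p w \<and> 0 < u w \<and> u w \<le> r \<and>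
     (\<forall>v. v \<noteq> w \<and> 0 < p v \<longrightarrow> 0 < u v \<and> u v < u w powr (p v / p w))}"
    by (simp add: winning_set_def)
  also have "\<dots> \<in> sets unif_vec" by measurable
  finally show ?thesis .
qed

lemma ln_div_less_of_less_powr:
  fixes a b c d :: real
  assumes "0 < a" "0 < b" "0 < c" "0 < d" "a < b powr (c / d)"
  shows "ln a / c < ln b / d"
proof -
  have "ln a < ln (b powr (c / d))" using assms by (subst ln_less_cancel_iff) auto
  also have "\<dots> = ln b / d * c" using assms by (simp add: ln_powr)
  finally show ?thesis using assms(3) pos_divide_less_eq by blast
qed

lemma decoder_winning_set:
  assumes "u \<in> winning_set p w r"
  shows "decoder p u = w"
  unfolding decoder_def
proof (rule some_equality)
  have w: "0 < p w" using assms by (simp add: winning_set_def)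
  have less: "ln (u v) / p v < ln (u w) / p w" if "v \<noteq> w" "0 < p v" for v
    using assms that w by (intro ln_div_less_of_less_powr) (auto simp: winning_set_def)
  then show "0 < p w \<and> (\<forall>v. 0 < p v \<longrightarrow> ln (u v) / p v \<le> ln (u w) / p w)"
    using w by (metis order.strict_implies_order order.refl)
  show "v = w" if "0 < p v \<and> (\<forall>v'. 0 < p v' \<longrightarrow> ln (u v') / p v' \<le> ln (u v) / p v)" for v
    using that less[of v] w by force
qed

lemma disjoint_winning_set:
  "w \<noteq> w' \<Longrightarrow> winning_set p w r \<inter> winning_set p w' r' = {}"
  using decoder_winning_set[of _ p w r] decoder_winning_set[of _ p w' r'] by auto

lemma nn_integral_winning_set_slice:
  fixes p :: "'w::finite \<Rightarrow> real"
  assumes p_nonneg: "\<And>v. 0 \<le> p v" and w: "0 < p w" and r: "r \<le> 1"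
  shows "(\<integral>\<^sup>+x. indicator (winning_set p w r) (x(w := y)) \<partial>PiM (UNIV - {w}) (\<lambda>_. unif01))
    = indicator {0<..r} y * ennreal (y powr (\<Sum>v\<in>UNIV - {w}. p v / p w))"
proof (cases "y \<in> {0<..r}")
  case False
  then have "indicator (winning_set p w r) (x(w := y)) = (0::ennreal)" for x
    by (auto simp: winning_set_def)
  then show ?thesis using False by simp
next
  case y: True
  interpret product_sigma_finite "\<lambda>_::'w. unif01"
    by (simp add: product_sigma_finite_def prob_space_imp_sigma_finite prob_space_unif01)
  define slab where "slab v = {z. 0 < p v \<longrightarrow> 0 < z \<and> z < y powr (p v / p w)}" for v
  have "(\<integral>\<^sup>+x. indicator (winning_set p w r) (x(w := y)) \<partial>PiM (UNIV - {w}) (\<lambda>_. unif01))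
      = (\<integral>\<^sup>+x. indicator (PiE (UNIV - {w}) slab) x \<partial>PiM (UNIV - {w}) (\<lambda>_. unif01))"
    using y w by (intro nn_integral_cong)
      (fastforce simp: winning_set_def slab_def space_PiM PiE_iff split: split_indicator)
  also have "\<dots> = (\<Prod>v\<in>UNIV - {w}. emeasure unif01 (slab v))"
    by (simp add: sets_PiM_I_finite slab_def emeasure_PiM)
  also have "\<dots> = (\<Prod>v\<in>UNIV - {w}. ennreal (y powr (p v / p w)))"
  proof (rule prod.cong[OF refl])
    fix v
    show "emeasure unif01 (slab v) = ennreal (y powr (p v / p w))"
    proof (cases "0 < p v")
      case True
      then have "slab v = {0<..<y powr (p v / p w)}" by (auto simp: slab_def)
      moreover have "y powr (p v / p w) \<le> 1"
        using y r p_nonneg[of v] w by (auto intro!: powr_le1)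
      ultimately show ?thesis by (simp add: emeasure_unif01_greaterThanLessThan)
    next
      case False
      then have "slab v = UNIV" "p v = 0" using p_nonneg[of v] by (auto simp: slab_def)
      then show ?thesis
        using y prob_space.emeasure_space_1[OF prob_space_unif01] by simp
    qed
  qed
  also have "\<dots> = ennreal (y powr (\<Sum>v\<in>UNIV - {w}. p v / p w))"
    using y by (simp add: prod_ennreal powr_sum)
  finally show ?thesis using y by simp
qed

text \<open>Conditioning on \<open>u w = y\<close>, the other coordinates must lie below \<open>y powr (p v / p w)\<close>,
  which has probability \<open>y powr ((1 - p w) / p w)\<close>; integrating over \<open>y \<in> {0<..r}\<close> gives
  \<open>p w * r powr (1 / p w)\<close>.\<close>
lemma emeasure_winning_set:
  fixes p :: "'w::finite \<Rightarrow> real"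
  assumes p_nonneg: "\<And>v. 0 \<le> p v" and p_sum: "(\<Sum>v\<in>UNIV. p v) = 1" and r: "0 < r" "r \<le> 1"
  shows "emeasure unif_vec (winning_set p w r) = ennreal (p w * r powr (1 / p w))"
proof (cases "0 < p w")
  case False
  then show ?thesis using p_nonneg[of w] by (simp add: winning_set_def)
next
  case True
  interpret product_sigma_finite "\<lambda>_::'w. unif01"
    by (simp add: product_sigma_finite_def prob_space_imp_sigma_finite prob_space_unif01)
  define c where "c = (1 - p w) / p w"
  have "p w \<le> 1" using p_nonneg p_sum member_le_sum[of w UNIV p] by simp
  then have "0 \<le> c" using True by (simp add: c_def)
  have "(\<Sum>v\<in>UNIV - {w}. p v / p w) = c"
    using p_sum by (simp add: c_def sum_divide_distrib[symmetric] sum_diff)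
  note slice = nn_integral_winning_set_slice[where p=p, OF p_nonneg True r(2), unfolded this]
  have "emeasure unif_vec (winning_set p w r)
      = (\<integral>\<^sup>+y. \<integral>\<^sup>+x. indicator (winning_set p w r) (x(w := y)) \<partial>PiM (UNIV - {w}) (\<lambda>_. unif01) \<partial>unif01)"
    using product_nn_integral_insert_rev[of "UNIV - {w}" w "indicator (winning_set p w r)"]
    by (simp add: insert_absorb)
  also have "\<dots> = ennreal (r powr (c + 1) / (c + 1))"
    unfolding slice using r \<open>0 \<le> c\<close> by (rule nn_integral_unif01_powr)
  also have "r powr (c + 1) / (c + 1) = p w * r powr (1 / p w)"
    using True by (simp add: c_def field_simps)
  finally show ?thesis .
qed

lemma measure_Union_winning_set:
  fixes p :: "'w::finite \<Rightarrow> real"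
  assumes "\<And>v. 0 \<le> p v" "(\<Sum>v\<in>UNIV. p v) = 1" "0 < r" "r \<le> 1"
  shows "measure unif_vec (\<Union>w. winning_set p w r) = (\<Sum>w\<in>UNIV. p w * r powr (1 / p w))"
proof -
  interpret prob_space "unif_vec :: ('w \<Rightarrow> real) measure" by (rule prob_space_unif_vec)
  have "measure unif_vec (\<Union>w. winning_set p w r) = (\<Sum>w\<in>UNIV. measure unif_vec (winning_set p w r))"
    by (rule finite_measure_finite_Union) (auto simp: disjoint_family_on_def disjoint_winning_set)
  also have "\<dots> = (\<Sum>w\<in>UNIV. p w * r powr (1 / p w))"
    using assms by (simp add: measure_def emeasure_winning_set)
  finally show ?thesis .
qed

lemma AE_winning_set:
  fixes p :: "'w::finite \<Rightarrow> real"
  assumes "\<And>v. 0 \<le> p v" "(\<Sum>v\<in>UNIV. p v) = 1"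
  shows "AE u in unif_vec. \<exists>w. u \<in> winning_set p w 1"
proof -
  interpret prob_space "unif_vec :: ('w \<Rightarrow> real) measure" by (rule prob_space_unif_vec)
  have "measure unif_vec (\<Union>w. winning_set p w 1) = 1"
    using assms by (simp add: measure_Union_winning_set)
  then show ?thesis
    by (subst (asm) AE_in_set_eq_1[symmetric]) auto
qed

lemma borel_measurable_gumbel_max [measurable]:
  "(\<lambda>u. u (decoder p u)) \<in> borel_measurable (unif_vec :: ('w::finite \<Rightarrow> real) measure)"
  by (rule measurable_decoder_select[OF measurable_const measurable_ident_sets[OF sets_unif_vec]])
    (simp add: space_PiM)

lemma measure_gumbel_max_le:
  fixes p :: "'w::finite \<Rightarrow> real"
  assumes p_nonneg: "\<And>v. 0 \<le> p v" and p_sum: "(\<Sum>v\<in>UNIV. p v) = 1"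
  shows "measure unif_vec {u. u (decoder p u) \<le> r} = cdf1 p r"
proof -
  have "AE u in unif_vec. u \<in> {u. u (decoder p u) \<le> r} \<longleftrightarrow> u \<in> (\<Union>w. winning_set p w (min r 1))"
    using AE_winning_set[OF p_nonneg p_sum]
  proof eventually_elim
    case (elim u)
    then obtain w where w: "u \<in> winning_set p w 1" by blast
    have unique: "w' = w" if "u \<in> winning_set p w' (min r 1)" for w'
      using decoder_winning_set[OF that] decoder_winning_set[OF w] by simp
    have "u \<in> winning_set p w (min r 1) \<longleftrightarrow> u w \<le> r"
      using w by (auto simp: winning_set_def)
    then show ?case
      using unique decoder_winning_set[OF w] by blast
  qed
  then have "measure unif_vec {u. u (decoder p u) \<le> r} = measure unif_vec (\<Union>w. winning_set p w (min r 1))"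
  proof (rule measure_eq_AE)
    have "{u. u (decoder p u) \<le> r} = {u \<in> space unif_vec. u (decoder p u) \<le> r}" by simp
    also have "\<dots> \<in> sets (unif_vec :: ('w \<Rightarrow> real) measure)" by measurable
    finally show "{u. u (decoder p u) \<le> r} \<in> sets (unif_vec :: ('w \<Rightarrow> real) measure)" .
  qed simp
  also have "\<dots> = cdf1 p r"
  proof (cases "0 < r")
    case True
    then show ?thesis
      using measure_Union_winning_set[OF p_nonneg p_sum, of "min r 1"] p_sum
      by (auto simp: cdf1_def min_def)
  next
    case False
    then have "(\<Union>w. winning_set p w (min r 1)) = {}" by (auto simp: winning_set_def)
    then show ?thesis using False by (simp add: cdf1_def)
  qed
  finally show ?thesis .
qed

lemma distr_gumbel_max:
  fixes p :: "'w::finite \<Rightarrow> real"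
  assumes "\<And>v. 0 \<le> p v" "(\<Sum>v\<in>UNIV. p v) = 1"
  shows "distr unif_vec borel (\<lambda>u. u (decoder p u)) = mu1 p"
proof -
  interpret unif_vec: prob_space "unif_vec :: ('w \<Rightarrow> real) measure" by (rule prob_space_unif_vec)
  let ?D = "distr unif_vec borel (\<lambda>u. u (decoder p u))"
  interpret D: real_distribution ?D
    by (auto simp: real_distribution_def real_distribution_axioms_def intro!: unif_vec.prob_space_distr)
  have cdf_D: "cdf ?D = cdf1 p"
  proof
    fix r
    have "cdf ?D r = measure unif_vec ((\<lambda>u. u (decoder p u)) -` {..r} \<inter> space unif_vec)"
      unfolding cdf_def by (subst measure_distr) auto
    then show "cdf ?D r = cdf1 p r"
      using measure_gumbel_max_le[OF assms, of r] by (simp add: vimage_def)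
  qed
  have mu1: "mu1 p = interval_measure (cdf ?D)"
    by (simp add: mu1_def cdf_D)
  have "real_distribution (mu1 p)"
    unfolding mu1 by (rule real_distribution_interval_measure)
      (auto simp: D.cdf_nondecreasing D.cdf_is_right_cont D.cdf_lim_at_bot D.cdf_lim_at_top_prob)
  moreover have "cdf (mu1 p) = cdf ?D"
    unfolding mu1 by (rule cdf_interval_measure)
      (auto simp: D.cdf_nondecreasing D.cdf_is_right_cont D.cdf_lim_at_bot)
  ultimately show ?thesis
    using D.real_distribution_axioms by (intro cdf_unique) simp_all
qed

lemma integral_mu1:
  fixes p :: "'w::finite \<Rightarrow> real" and h :: "real \<Rightarrow> real"
  assumes "\<And>v. 0 \<le> p v" "(\<Sum>v\<in>UNIV. p v) = 1" and [measurable]: "h \<in> borel_measurable borel"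
  shows "(\<integral>y. h y \<partial>mu1 p) = (\<integral>u. h (u (decoder p u)) \<partial>unif_vec)"
  using integral_distr[of "\<lambda>u. u (decoder p u)" unif_vec borel h] distr_gumbel_max[OF assms(1,2)]
  by simp

lemma borel_measurable_integral_gumbel_max:
  fixes h :: "real \<Rightarrow> real"
  assumes [measurable]: "h \<in> borel_measurable borel"
  shows "(\<lambda>q. \<integral>u. h (u (decoder q u)) \<partial>unif_vec) \<in> borel_measurable (vecM :: ('w::finite \<Rightarrow> real) measure)"
proof -
  interpret unif_vec: sigma_finite_measure "unif_vec :: ('w \<Rightarrow> real) measure"
    by (rule prob_space_imp_sigma_finite[OF prob_space_unif_vec])
  have "snd \<in> measurable (vecM \<Otimes>\<^sub>M (unif_vec :: ('w \<Rightarrow> real) measure)) vecM"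
    using measurable_snd measurable_cong_sets[OF refl sets_unif_vec] by blast
  from measurable_decoder_select[OF measurable_fst this]
  have "(\<lambda>x. h (snd x (decoder (fst x) (snd x)))) \<in> borel_measurable (vecM \<Otimes>\<^sub>M (unif_vec :: ('w \<Rightarrow> real) measure))"
    by measurable
  then have "case_prod (\<lambda>q u. h (u (decoder q u))) \<in> borel_measurable (vecM \<Otimes>\<^sub>M (unif_vec :: ('w \<Rightarrow> real) measure))"
    by (simp add: case_prod_beta')
  then show ?thesis
    by (rule unif_vec.borel_measurable_lebesgue_integral)
qed

section \<open>One step of the watermark model\<close>

text \<open>In the notation of the paper: \<open>F\<close> is \<open>\<F>\<^sub>t\<^sub>-\<^sub>1\<close>, \<open>Fx\<close> is \<open>\<sigma>(\<F>\<^sub>t\<^sub>-\<^sub>1, \<xi>\<^sub>t)\<close>,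
  \<open>p = P\<^sub>t\<close>, \<open>U = \<xi>\<^sub>t\<close>, \<open>W = w\<^sub>t\<close>, and \<open>B\<close> is the coin selecting the watermark decoder.\<close>
locale watermark_step = prob_space M for M :: "'a measure" +
  fixes F Fx :: "'a measure"
    and p U :: "'a \<Rightarrow> 'w::finite \<Rightarrow> real"
    and W :: "'a \<Rightarrow> 'w" and B :: "'a \<Rightarrow> bool" and eps :: real
  assumes subalgebra_Fx: "subalgebra M Fx"
    and subalgebra_F: "subalgebra Fx F"
    and measurable_p [measurable]: "p \<in> measurable F vecM"
    and measurable_U [measurable]: "U \<in> measurable Fx vecM"
    and measurable_W [measurable]: "W \<in> measurable M (count_space UNIV)"
    and measurable_B [measurable]: "B \<in> measurable M (count_space UNIV)"
    and p_nonneg: "\<And>\<omega> v. \<omega> \<in> space M \<Longrightarrow> 0 \<le> p \<omega> v"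
    and p_sum: "\<And>\<omega>. \<omega> \<in> space M \<Longrightarrow> (\<Sum>v\<in>UNIV. p \<omega> v) = 1"
    and distr_U: "distr M vecM U = unif_vec"
    and indep_U: "indep_set (sets F) (gen M U vecM)"
    and W_decoder: "\<And>\<omega>. \<omega> \<in> space M \<Longrightarrow> B \<omega> \<Longrightarrow> W \<omega> = decoder (p \<omega>) (U \<omega>)"
    and prob_B: "\<And>A. A \<in> sets Fx \<Longrightarrow> prob (A \<inter> {\<omega>\<in>space M. B \<omega>}) = eps * prob A"
    and prob_not_B: "\<And>A v. A \<in> sets Fx \<Longrightarrow>
      prob (A \<inter> {\<omega>\<in>space M. \<not> B \<omega> \<and> W \<omega> = v}) = (1 - eps) * (\<integral>\<omega>. indicator A \<omega> * p \<omega> v \<partial>M)"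
    and eps: "0 \<le> eps" "eps \<le> 1"
begin

abbreviation Y :: "'a \<Rightarrow> real" where
  "Y \<omega> \<equiv> U \<omega> (W \<omega>)"

abbreviation watermarked :: "'a set" where
  "watermarked \<equiv> {\<omega>\<in>space M. B \<omega>}"

abbreviation drawn :: "'w \<Rightarrow> 'a set" where
  "drawn v \<equiv> {\<omega>\<in>space M. \<not> B \<omega> \<and> W \<omega> = v}"

abbreviation mixture_mean :: "(real \<Rightarrow> real) \<Rightarrow> 'a \<Rightarrow> real" where
  "mixture_mean h \<omega> \<equiv> eps * (\<integral>y. h y \<partial>mu1 (p \<omega>)) + (1 - eps) * (\<integral>y. h y \<partial>unif01)"

lemma subalgebra_M_F: "subalgebra M F"
  using subalgebra_Fx subalgebra_F by (rule subalgebra_trans)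

lemma measurable_p_Fx [measurable]: "p \<in> measurable Fx vecM"
  using subalgebra_F measurable_p by (rule measurable_from_subalg)

lemma measurable_p_M [measurable]: "p \<in> measurable M vecM"
  using subalgebra_M_F measurable_p by (rule measurable_from_subalg)

lemma measurable_U_M [measurable]: "U \<in> measurable M vecM"
  using subalgebra_Fx measurable_U by (rule measurable_from_subalg)

lemma sets_F_subset: "G \<in> sets F \<Longrightarrow> G \<in> sets Fx" "G \<in> sets F \<Longrightarrow> G \<in> events"
  using subalgebra_F subalgebra_M_F by (auto simp: subalgebra_def)

lemma sets_watermarked [measurable]: "watermarked \<in> events"
  by measurable

lemma sets_drawn [measurable]: "drawn v \<in> events"
  by measurable

lemma p_le_1: "\<omega> \<in> space M \<Longrightarrow> p \<omega> v \<le> 1"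
  using p_nonneg p_sum member_le_sum[of v UNIV "p \<omega>"] by auto

lemma integrable_p: "integrable M (\<lambda>\<omega>. p \<omega> v)"
  by (rule integrable_const_bound[where B=1]) (auto intro!: AE_I2 simp: p_nonneg p_le_1)

lemma integrable_component:
  fixes h :: "real \<Rightarrow> real"
  assumes "integrable unif01 h"
  shows "integrable M (\<lambda>\<omega>. h (U \<omega> v))"
proof -
  have [measurable]: "h \<in> borel_measurable borel"
    using assms by (rule borel_measurable_integrable_unif01)
  have "integrable (distr M vecM U) (\<lambda>u. h (u v))"
    unfolding distr_U using assms by (rule integral_unif_vec_component(1))
  then show ?thesis
    by (subst (asm) integrable_distr_eq) auto
qed

lemma integrable_select_component:
  fixes h :: "real \<Rightarrow> real"
  assumes "integrable unif01 h" "k \<in> measurable M (count_space UNIV)"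
  shows "integrable M (\<lambda>\<omega>. h (U \<omega> (k \<omega>)))"
  using integrable_select[where f="\<lambda>v \<omega>. h (U \<omega> v)"] integrable_component assms by blast

lemma h_Y_decomposition:
  fixes h :: "real \<Rightarrow> real"
  assumes "\<omega> \<in> space M"
  shows "h (Y \<omega>) = h (U \<omega> (decoder (p \<omega>) (U \<omega>))) * indicator watermarked \<omega>
    + (\<Sum>v\<in>UNIV. h (U \<omega> v) * indicator (drawn v) \<omega>)"
proof (cases "B \<omega>")
  case True
  then show ?thesis using W_decoder assms by simp
next
  case False
  then have "(\<Sum>v\<in>UNIV. h (U \<omega> v) * indicator (drawn v) \<omega>) = (\<Sum>v\<in>UNIV. if v = W \<omega> then h (U \<omega> v) else 0)"
    using assms by (intro sum.cong) auto
  then show ?thesis using False assms by simp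
qed

lemma integral_mu1_p:
  fixes h :: "real \<Rightarrow> real"
  assumes "h \<in> borel_measurable borel" "\<omega> \<in> space M"
  shows "(\<integral>y. h y \<partial>mu1 (p \<omega>)) = (\<integral>u. h (u (decoder (p \<omega>) u)) \<partial>unif_vec)"
  using assms by (intro integral_mu1 p_nonneg p_sum)

lemma integrable_gumbel_mean:
  fixes h :: "real \<Rightarrow> real"
  assumes h: "integrable unif01 h"
  shows "integrable M (\<lambda>\<omega>. \<integral>y. h y \<partial>mu1 (p \<omega>))"
proof -
  have h_borel: "h \<in> borel_measurable borel"
    using h by (rule borel_measurable_integrable_unif01)
  have "integrable M (\<lambda>\<omega>. h (U \<omega> (decoder (p \<omega>) (U \<omega>))))"
    using h measurable_decoder[OF measurable_p_M measurable_U_M] by (rule integrable_select_component)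
  from integral_freeze_indep(1)[where f="\<lambda>\<omega> u. h (u (decoder (p \<omega>) u))", OF subalgebra_M_F measurable_U_M indep_U
      measurable_gumbel_max_pair[OF h_borel measurable_p] this]
  have "integrable M (\<lambda>\<omega>. \<integral>u. h (u (decoder (p \<omega>) u)) \<partial>unif_vec)"
    by (simp add: distr_U)
  moreover have "integrable M (\<lambda>\<omega>. \<integral>y. h y \<partial>mu1 (p \<omega>))
      = integrable M (\<lambda>\<omega>. \<integral>u. h (u (decoder (p \<omega>) u)) \<partial>unif_vec)"
    using integral_mu1_p[OF h_borel] by (rule Bochner_Integration.integrable_cong[OF refl])
  ultimately show ?thesis by simp
qed

lemma borel_measurable_gumbel_mean:
  fixes h :: "real \<Rightarrow> real"
  assumes h: "integrable unif01 h" and S: "subalgebra M S" "p \<in> measurable S vecM"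
  shows "(\<lambda>\<omega>. \<integral>y. h y \<partial>mu1 (p \<omega>)) \<in> borel_measurable S"
proof -
  have h_borel: "h \<in> borel_measurable borel"
    using h by (rule borel_measurable_integrable_unif01)
  have "(\<lambda>\<omega>. \<integral>u. h (u (decoder (p \<omega>) u)) \<partial>unif_vec) \<in> borel_measurable S"
    using measurable_compose[OF S(2) borel_measurable_integral_gumbel_max[OF h_borel]] .
  moreover have "space S = space M"
    using S(1) by (simp add: subalgebra_def)
  ultimately show ?thesis
    using measurable_cong[of S, OF integral_mu1_p[OF h_borel]] by simp
qed

lemma integral_watermarked:
  fixes h :: "real \<Rightarrow> real"
  assumes h: "integrable unif01 h" and G: "G \<in> sets F"
  shows "(\<integral>\<omega>. indicator G \<omega> * h (U \<omega> (decoder (p \<omega>) (U \<omega>))) * indicator watermarked \<omega> \<partial>M)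
    = eps * (\<integral>\<omega>. indicator G \<omega> * (\<integral>y. h y \<partial>mu1 (p \<omega>)) \<partial>M)"
proof -
  have h_borel [measurable]: "h \<in> borel_measurable borel"
    using h by (rule borel_measurable_integrable_unif01)
  have G_Fx [measurable]: "G \<in> sets Fx" and G_M [measurable]: "G \<in> events"
    using G by (rule sets_F_subset)+
  let ?f = "\<lambda>\<omega> u. indicator G \<omega> * h (u (decoder (p \<omega>) u))"
  have f_pair: "(\<lambda>(\<omega>, u). ?f \<omega> u) \<in> borel_measurable (F \<Otimes>\<^sub>M vecM)"
    using measurable_gumbel_max_pair[OF h_borel measurable_p] G by measurable
  have "(\<lambda>\<omega>. U \<omega> (decoder (p \<omega>) (U \<omega>))) \<in> borel_measurable Fx"
    by (rule measurable_decoder_select[OF measurable_p_Fx measurable_U])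
  then have f_Fx: "(\<lambda>\<omega>. ?f \<omega> (U \<omega>)) \<in> borel_measurable Fx"
    by measurable
  have "integrable M (\<lambda>\<omega>. h (U \<omega> (decoder (p \<omega>) (U \<omega>))))"
    using h measurable_decoder[OF measurable_p_M measurable_U_M] by (rule integrable_select_component)
  from integrable_real_mult_indicator[OF G_M this]
  have f_int: "integrable M (\<lambda>\<omega>. ?f \<omega> (U \<omega>))"
    by (simp add: mult.commute)
  have "(\<integral>\<omega>. ?f \<omega> (U \<omega>) * indicator watermarked \<omega> \<partial>M) = (\<integral>\<omega>. ?f \<omega> (U \<omega>) * eps \<partial>M)"
  proof (rule integral_mult_indicator_cond_prob[OF subalgebra_Fx])
    fix A assume "A \<in> sets Fx"
    then show "prob (A \<inter> watermarked) = (\<integral>\<omega>. indicator A \<omega> * eps \<partial>M)"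
      using subalgebra_Fx by (simp add: prob_B subalgebra_def subset_eq)
  qed (use f_Fx f_int integrable_real_mult_indicator[OF sets_watermarked f_int] in auto)
  also have "\<dots> = eps * (\<integral>\<omega>. ?f \<omega> (U \<omega>) \<partial>M)"
    by (simp add: mult.commute)
  also have "(\<integral>\<omega>. ?f \<omega> (U \<omega>) \<partial>M) = (\<integral>\<omega>. \<integral>u. ?f \<omega> u \<partial>unif_vec \<partial>M)"
    using integral_freeze_indep(3)[where f="?f", OF subalgebra_M_F measurable_U_M indep_U f_pair f_int]
    by (simp add: distr_U)
  also have "\<dots> = (\<integral>\<omega>. indicator G \<omega> * (\<integral>y. h y \<partial>mu1 (p \<omega>)) \<partial>M)"
    by (intro Bochner_Integration.integral_cong refl) (simp add: integral_mu1_p[OF h_borel])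
  finally show ?thesis .
qed

lemma integral_drawn:
  fixes h :: "real \<Rightarrow> real"
  assumes h: "integrable unif01 h" and G: "G \<in> sets F"
  shows "(\<integral>\<omega>. indicator G \<omega> * h (U \<omega> v) * indicator (drawn v) \<omega> \<partial>M)
    = (1 - eps) * (\<integral>y. h y \<partial>unif01) * (\<integral>\<omega>. indicator G \<omega> * p \<omega> v \<partial>M)"
proof -
  have h_borel [measurable]: "h \<in> borel_measurable borel"
    using h by (rule borel_measurable_integrable_unif01)
  have G_Fx [measurable]: "G \<in> sets Fx" and G_M [measurable]: "G \<in> events"
    using G by (rule sets_F_subset)+
  let ?q = "\<lambda>\<omega>. (1 - eps) * p \<omega> v"
  let ?f = "\<lambda>\<omega> u. indicator G \<omega> * h (u v)"
  have q_bound: "AE \<omega> in M. \<bar>?q \<omega>\<bar> \<le> 1"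
    using eps p_nonneg p_le_1 by (intro AE_I2) (simp add: abs_mult mult_le_one)
  have f_int: "integrable M (\<lambda>\<omega>. ?f \<omega> (U \<omega>))"
    using integrable_real_mult_indicator[OF G_M integrable_component[OF h]] by (simp add: mult.commute)
  have fq_int: "integrable M (\<lambda>\<omega>. ?f \<omega> (U \<omega>) * ?q \<omega>)"
    by (rule integrable_mult_bounded[OF f_int _ q_bound]) measurable
  have "(\<integral>\<omega>. ?f \<omega> (U \<omega>) * indicator (drawn v) \<omega> \<partial>M) = (\<integral>\<omega>. ?f \<omega> (U \<omega>) * ?q \<omega> \<partial>M)"
  proof (rule integral_mult_indicator_cond_prob[OF subalgebra_Fx])
    show "integrable M ?q"
      using integrable_p by simp
    fix A assume "A \<in> sets Fx"
    then show "prob (A \<inter> drawn v) = (\<integral>\<omega>. indicator A \<omega> * ?q \<omega> \<partial>M)"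
      using prob_not_B[of A v] by (simp add: mult.left_commute)
  qed (use f_int integrable_real_mult_indicator[OF sets_drawn f_int] in auto)
  also have "\<dots> = (\<integral>\<omega>. \<integral>u. ?f \<omega> u * ?q \<omega> \<partial>unif_vec \<partial>M)"
  proof -
    have "(\<lambda>(\<omega>, u). ?f \<omega> u * ?q \<omega>) \<in> borel_measurable (F \<Otimes>\<^sub>M vecM)"
      using G by measurable
    from integral_freeze_indep(3)[where f="\<lambda>\<omega> u. ?f \<omega> u * ?q \<omega>",
        OF subalgebra_M_F measurable_U_M indep_U this fq_int]
    show ?thesis by (simp add: distr_U)
  qed
  also have "\<dots> = (\<integral>\<omega>. ((1 - eps) * (\<integral>y. h y \<partial>unif01)) * (indicator G \<omega> * p \<omega> v) \<partial>M)"
  proof (intro Bochner_Integration.integral_cong refl)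
    fix \<omega>
    have "(\<integral>u. ?f \<omega> u * ?q \<omega> \<partial>unif_vec) = indicator G \<omega> * (\<integral>u. h (u v) \<partial>unif_vec) * ?q \<omega>"
      by (simp only: integral_mult_right_zero integral_mult_left_zero)
    then show "(\<integral>u. ?f \<omega> u * ?q \<omega> \<partial>unif_vec) = (1 - eps) * (\<integral>y. h y \<partial>unif01) * (indicator G \<omega> * p \<omega> v)"
      unfolding integral_unif_vec_component(2)[OF h] by (simp add: ac_simps)
  qed
  finally show ?thesis by simp
qed

lemma integral_indicator_h_Y_decomposition:
  fixes h :: "real \<Rightarrow> real"
  assumes h: "integrable unif01 h" and G: "G \<in> sets F"
  shows "(\<integral>\<omega>. indicator G \<omega> * h (Y \<omega>) \<partial>M)
    = (\<integral>\<omega>. indicator G \<omega> * h (U \<omega> (decoder (p \<omega>) (U \<omega>))) * indicator watermarked \<omega> \<partial>M)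
      + (\<Sum>v\<in>UNIV. \<integral>\<omega>. indicator G \<omega> * h (U \<omega> v) * indicator (drawn v) \<omega> \<partial>M)"
proof -
  let ?X = "\<lambda>\<omega>. indicator G \<omega> * h (U \<omega> (decoder (p \<omega>) (U \<omega>))) * indicator watermarked \<omega>"
  let ?Z = "\<lambda>v \<omega>. indicator G \<omega> * h (U \<omega> v) * indicator (drawn v) \<omega>"
  have G_M [measurable]: "G \<in> events"
    using G by (rule sets_F_subset)
  have X_int: "integrable M ?X"
    using integrable_select_component[OF h measurable_decoder[OF measurable_p_M measurable_U_M]]
    by (intro integrable_real_mult_indicator integrable_mult_indicator[where 'b=real, simplified]) auto
  have Z_int: "integrable M (?Z v)" for v
    using integrable_component[OF h]
    by (intro integrable_real_mult_indicator integrable_mult_indicator[where 'b=real, simplified]) auto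
  have "(\<integral>\<omega>. indicator G \<omega> * h (Y \<omega>) \<partial>M) = (\<integral>\<omega>. ?X \<omega> + (\<Sum>v\<in>UNIV. ?Z v \<omega>) \<partial>M)"
  proof (intro Bochner_Integration.integral_cong refl)
    fix \<omega> assume "\<omega> \<in> space M"
    then show "indicator G \<omega> * h (Y \<omega>) = ?X \<omega> + (\<Sum>v\<in>UNIV. ?Z v \<omega>)"
      by (simp only: h_Y_decomposition[OF \<open>\<omega> \<in> space M\<close>] distrib_left sum_distrib_left mult.assoc)
  qed
  also have "\<dots> = (\<integral>\<omega>. ?X \<omega> \<partial>M) + (\<Sum>v\<in>UNIV. \<integral>\<omega>. ?Z v \<omega> \<partial>M)"
    using Bochner_Integration.integral_add[OF X_int Bochner_Integration.integrable_sum[where f="?Z", OF Z_int]]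
      Bochner_Integration.integral_sum[where f="?Z", OF Z_int] by (simp only:)
  finally show ?thesis .
qed

lemma integral_indicator_mixture_mean:
  fixes h :: "real \<Rightarrow> real"
  assumes h: "integrable unif01 h" and G: "G \<in> sets F"
  shows "(\<integral>\<omega>. indicator G \<omega> * mixture_mean h \<omega> \<partial>M)
    = eps * (\<integral>\<omega>. indicator G \<omega> * (\<integral>y. h y \<partial>mu1 (p \<omega>)) \<partial>M)
      + (\<Sum>v\<in>UNIV. (1 - eps) * (\<integral>y. h y \<partial>unif01) * (\<integral>\<omega>. indicator G \<omega> * p \<omega> v \<partial>M))"
proof -
  let ?E0 = "\<integral>y. h y \<partial>unif01"
  let ?P = "\<lambda>v \<omega>. indicator G \<omega> * p \<omega> v"
  have G_M [measurable]: "G \<in> events"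
    using G by (rule sets_F_subset)
  have P_int: "integrable M (?P v)" for v
    using integrable_p by (intro integrable_mult_indicator[where 'b=real, simplified]) auto
  have m_int: "integrable M (\<lambda>\<omega>. indicator G \<omega> * (\<integral>y. h y \<partial>mu1 (p \<omega>)))"
    using integrable_gumbel_mean[OF h] by (intro integrable_mult_indicator[where 'b=real, simplified]) auto
  have "(\<integral>\<omega>. indicator G \<omega> * mixture_mean h \<omega> \<partial>M)
      = (\<integral>\<omega>. eps * (indicator G \<omega> * (\<integral>y. h y \<partial>mu1 (p \<omega>))) + (\<Sum>v\<in>UNIV. (1 - eps) * ?E0 * ?P v \<omega>) \<partial>M)"
  proof (intro Bochner_Integration.integral_cong refl)
    fix \<omega> assume "\<omega> \<in> space M"
    then have "(\<Sum>v\<in>UNIV. (1 - eps) * ?E0 * ?P v \<omega>) = (1 - eps) * ?E0 * indicator G \<omega> * (\<Sum>v\<in>UNIV. p \<omega> v)"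
      by (simp add: sum_distrib_left mult.assoc)
    also have "\<dots> = (1 - eps) * ?E0 * indicator G \<omega>"
      using p_sum \<open>\<omega> \<in> space M\<close> by simp
    finally show "indicator G \<omega> * mixture_mean h \<omega>
        = eps * (indicator G \<omega> * (\<integral>y. h y \<partial>mu1 (p \<omega>))) + (\<Sum>v\<in>UNIV. (1 - eps) * ?E0 * ?P v \<omega>)"
      by (simp add: algebra_simps)
  qed
  also have "\<dots> = eps * (\<integral>\<omega>. indicator G \<omega> * (\<integral>y. h y \<partial>mu1 (p \<omega>)) \<partial>M)
      + (\<Sum>v\<in>UNIV. (1 - eps) * ?E0 * (\<integral>\<omega>. ?P v \<omega> \<partial>M))"
    using m_int P_int by (simp add: Bochner_Integration.integral_sum)
  finally show ?thesis .
qed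

lemma integral_indicator_h_Y:
  fixes h :: "real \<Rightarrow> real"
  assumes h: "integrable unif01 h" and G: "G \<in> sets F"
  shows "(\<integral>\<omega>. indicator G \<omega> * h (Y \<omega>) \<partial>M) = (\<integral>\<omega>. indicator G \<omega> * mixture_mean h \<omega> \<partial>M)"
  by (simp add: integral_indicator_h_Y_decomposition[OF h G] integral_indicator_mixture_mean[OF h G]
      integral_watermarked[OF h G] integral_drawn[OF h G])

theorem real_cond_exp_h_Y:
  fixes h :: "real \<Rightarrow> real"
  assumes h: "integrable unif01 h" and S: "subalgebra F S" "p \<in> measurable S vecM"
  shows "AE \<omega> in M. real_cond_exp M S (\<lambda>\<omega>. h (Y \<omega>)) \<omega> = mixture_mean h \<omega>"
proof -
  have sub: "subalgebra M S"
    using subalgebra_M_F S(1) by (rule subalgebra_trans)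
  interpret finite_measure_subalgebra M S
    by unfold_locales (rule sub)
  show ?thesis
  proof (rule real_cond_exp_charact)
    fix A assume "A \<in> sets S"
    then have "A \<in> sets F" using S(1) by (auto simp: subalgebra_def)
    then show "(\<integral>\<omega>\<in>A. h (Y \<omega>) \<partial>M) = (\<integral>\<omega>\<in>A. mixture_mean h \<omega> \<partial>M)"
      unfolding set_lebesgue_integral_def using integral_indicator_h_Y[OF h] by simp
  next
    show "integrable M (\<lambda>\<omega>. h (Y \<omega>))"
      using h measurable_W by (rule integrable_select_component)
    show "integrable M (mixture_mean h)"
      using integrable_gumbel_mean[OF h] by simp
    show "mixture_mean h \<in> borel_measurable S"
      using borel_measurable_gumbel_mean[OF h sub S(2)] by measurable
  qed
qed

end

lemma subalgebra_filt:
  assumes t: "t \<in> {1..n}"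
    and P: "\<And>s. s \<in> {1..n} \<Longrightarrow> P s \<in> measurable M vecM"
    and U: "\<And>s. s \<in> {1..n} \<Longrightarrow> U s \<in> measurable M vecM"
    and W: "\<And>s. s \<in> {1..n} \<Longrightarrow> W s \<in> measurable M (count_space UNIV)"
  shows "subalgebra M (filt M P U W t)" and "P t \<in> measurable (filt M P U W t) vecM"
proof -
  let ?G = "gen M (P t) vecM \<union> (\<Union>j\<in>{1..<t}. gen M (W j) (count_space UNIV) \<union> gen M (U j) vecM \<union> gen M (P (Suc j)) vecM)"
  have "gen M (W j) (count_space UNIV) \<union> gen M (U j) vecM \<union> gen M (P (Suc j)) vecM \<subseteq> sets M"
    if "j \<in> {1..<t}" for j
    using that t gen_subset_sets[OF W] gen_subset_sets[OF U] gen_subset_sets[OF P, of "Suc j"] by auto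
  then have G: "?G \<subseteq> sets M"
    using gen_subset_sets[OF P[OF t]] by blast
  then show "subalgebra M (filt M P U W t)"
    unfolding filt_def by (rule subalgebra_sigma)
  show "P t \<in> measurable (filt M P U W t) vecM"
    unfolding filt_def by (rule measurable_sigma_gen[OF P[OF t] _ G]) auto
qed

theorem lemmaA2:
  fixes M :: "'a measure"
    and n :: nat and eps :: real
    and P :: "nat \<Rightarrow> 'a \<Rightarrow> ('w::finite) \<Rightarrow> real"   (* next-token distributions P_t *)
    and U :: "nat \<Rightarrow> 'a \<Rightarrow> 'w \<Rightarrow> real"               (* xi_t = (U_{t,w})_w *)
    and W :: "nat \<Rightarrow> 'a \<Rightarrow> 'w"                       (* observed tokens w_t *)
    and B :: "nat \<Rightarrow> 'a \<Rightarrow> bool"                     (* watermark coin: w_t = S(P_t,xi_t) *)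
    and h :: "real \<Rightarrow> real" and t :: nat
  assumes M: "prob_space M"
    and eps: "0 \<le> eps" "eps \<le> 1"
    and P_meas: "\<And>s. s \<in> {1..n} \<Longrightarrow> P s \<in> measurable M vecM"
    and P_prob: "\<And>s \<omega> v. s \<in> {1..n} \<Longrightarrow> \<omega> \<in> space M \<Longrightarrow> 0 \<le> P s \<omega> v"
    and P_sum: "\<And>s \<omega>. s \<in> {1..n} \<Longrightarrow> \<omega> \<in> space M \<Longrightarrow> (\<Sum>v\<in>UNIV. P s \<omega> v) = 1"
    and U_meas: "\<And>s. s \<in> {1..n} \<Longrightarrow> U s \<in> measurable M vecM"
    and W_meas: "\<And>s. s \<in> {1..n} \<Longrightarrow> W s \<in> measurable M (count_space UNIV)"
    and B_meas: "\<And>s. s \<in> {1..n} \<Longrightarrow> B s \<in> measurable M (count_space UNIV)"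
    \<comment> \<open>(a): xi_1,...,xi_n i.i.d. with i.i.d. U(0,1) entries, xi_t independent of F_{t-1}\<close>
    and U_distr: "\<And>s. s \<in> {1..n} \<Longrightarrow> distr M vecM (U s) = PiM UNIV (\<lambda>_. unif01)"
    and U_iid: "prob_space.indep_vars M (\<lambda>_. vecM) U {1..n}"
    and U_indep: "\<And>s. s \<in> {1..n} \<Longrightarrow>
        prob_space.indep_set M (sets (filt M P U W s)) (gen M (U s) vecM)"
    \<comment> \<open>(b): with probability eps (independently of F_{t-1} and xi_t), w_t = S(P_t,xi_t)\<close>
    and B_wm: "\<And>s \<omega>. s \<in> {1..n} \<Longrightarrow> \<omega> \<in> space M \<Longrightarrow> B s \<omega> \<Longrightarrow> W s \<omega> = decoder (P s \<omega>) (U s \<omega>)"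
    and B_prob: "\<And>s G. s \<in> {1..n} \<Longrightarrow> G \<in> sets (filt_xi M P U W s) \<Longrightarrow>
        measure M (G \<inter> {\<omega>\<in>space M. B s \<omega>}) = eps * measure M G"
    \<comment> \<open>otherwise w_t ~ P_t, conditionally on F_{t-1} independent of xi_t\<close>
    and B_not: "\<And>s G v. s \<in> {1..n} \<Longrightarrow> G \<in> sets (filt_xi M P U W s) \<Longrightarrow>
        measure M (G \<inter> {\<omega>\<in>space M. \<not> B s \<omega> \<and> W s \<omega> = v})
          = (1 - eps) * (\<integral>\<omega>. indicator G \<omega> * P s \<omega> v \<partial>M)"
    and h_int: "integrable unif01 h"
    and t: "t \<in> {1..n}"
  shows "(AE \<omega> in M. real_cond_exp M (filt M P U W t) (\<lambda>\<omega>. h (U t \<omega> (W t \<omega>))) \<omega>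
            = eps * (\<integral>y. h y \<partial>mu1 (P t \<omega>)) + (1 - eps) * (\<integral>y. h y \<partial>unif01))
       \<and> (AE \<omega> in M. real_cond_exp M (sigP M P t) (\<lambda>\<omega>. h (U t \<omega> (W t \<omega>))) \<omega>
            = eps * (\<integral>y. h y \<partial>mu1 (P t \<omega>)) + (1 - eps) * (\<integral>y. h y \<partial>unif01))"
proof -
  interpret prob_space M by (rule M)
  note filt = subalgebra_filt[where P=P and U=U and W=W, OF t P_meas U_meas W_meas]
  have filt_xi: "subalgebra M (filt_xi M P U W t)" "subalgebra (filt_xi M P U W t) (filt M P U W t)"
    "U t \<in> measurable (filt_xi M P U W t) vecM"
    unfolding filt_xi_def using subalgebra_sigma_adjoin[OF filt(1) U_meas[OF t]] by blast+
  have sigP: "subalgebra (filt M P U W t) (sigP M P t)" "P t \<in> measurable (sigP M P t) vecM"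
    unfolding sigP_def using subalgebra_sigma_gen[OF filt] by blast+
  interpret watermark_step M "filt M P U W t" "filt_xi M P U W t" "P t" "U t" "W t" "B t" eps
    by unfold_locales (assumption | rule filt(2) filt_xi eps P_prob[OF t] P_sum[OF t] U_distr[OF t]
      U_indep[OF t] B_wm[OF t] B_prob[OF t] B_not[OF t] W_meas[OF t] B_meas[OF t])+
  show ?thesis
    using real_cond_exp_h_Y[OF h_int _ filt(2)] real_cond_exp_h_Y[OF h_int sigP]
    unfolding subalgebra_def by blast
qed

end
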